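(* For every $T_1,T_2\in\mathcal{T}_n$, if $\pi(T_1)=\pi(T_2)$ in $\mathfrak{S}_{2n-2}$, then $T_1=T_2$.
   Context: A phylogenetic tree is a finite rooted tree (arcs directed away from the root) with no node of outdegree $1$, whose leaves are injectively labeled. $\mathcal{T}_n$ denotes the set of phylogenetic trees with $n$ leaves labeled $1,\dots,n$, up to label-preserving isomorphism. Internal nodes are the non-leaf nodes; $\mathcal{L}(T)$ is the set of leaves. The height of a node is the length of a longest directed path from it to a leaf. The bottom-up ordering of $T=(V,E)\in\mathcal{T}_n$ is the unique injective map $\ell:V\to\{1,\dots,|V|\}$ such that: (a) for a leaf $v$, $\ell(v)$ is its label; (b) if $\mathrm{height}(u)<\mathrm{height}(v)$ then $\ell(u)<\ell(v)$; (c) if $0<\mathrm{height}(u)=\mathrm{height}(v)$ and $\min\{\ell(x): x \text{ child of } u\}<\min\{\ell(x): x\text{ child of } v\}$ then $\ell(u)<\ell(v)$. For a subset $S=\{i_1<\dots<i_k\}$ with $k\ge 2$, $\kappa(S)$ is the cyclic permutation $(i_1,i_2,\dots,i_k)$ sending $i_1\mapsto i_2\mapsto\dots\mapsto i_k\mapsto i_1$. The matching permutation of $T$ is $\pi(T)=\prod_{u\in V\setminus\mathcal{L}(T)}\kappa(\ell(\mathrm{children}(u)))$ (a product of disjoint cycles), regarded as an element of the symmetric group $\mathfrak{S}_{2n-2}$ fixing $|V|,\dots,2n-2$. *)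

theory Defs
  imports Main "HOL-Combinatorics.Cycles" "HOL-Library.FuncSet"
begin

text \<open>A rooted tree with arcs directed away from the root, together with a
  labelling of its leaves. Labels of non-leaf vertices are irrelevant.\<close>
record 'a ltree =
  verts :: "'a set"
  arcs  :: "('a \<times> 'a) set"
  root  :: 'a
  label :: "'a \<Rightarrow> nat"

definition children :: "'a ltree \<Rightarrow> 'a \<Rightarrow> 'a set" where
  "children T u = {v. (u, v) \<in> arcs T}"

definition leaves :: "'a ltree \<Rightarrow> 'a set" where
  "leaves T = {v \<in> verts T. children T v = {}}"

definition internal :: "'a ltree \<Rightarrow> 'a set" where
  "internal T = verts T - leaves T"

definition phylo_tree :: "nat \<Rightarrow> 'a ltree \<Rightarrow> bool" where
  "phylo_tree n T \<longleftrightarrow>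
     finite (verts T) \<and>
     arcs T \<subseteq> verts T \<times> verts T \<and>
     root T \<in> verts T \<and>
     (\<forall>v. (v, root T) \<notin> arcs T) \<and>
     (\<forall>v \<in> verts T - {root T}. \<exists>!u. (u, v) \<in> arcs T) \<and>
     (\<forall>v \<in> verts T. (root T, v) \<in> (arcs T)\<^sup>*) \<and>
     (\<forall>u \<in> verts T. card (children T u) \<noteq> 1) \<and>
     bij_betw (label T) (leaves T) {1..n}"

definition tree_iso :: "'a ltree \<Rightarrow> 'b ltree \<Rightarrow> bool" where
  "tree_iso T1 T2 \<longleftrightarrow>
     (\<exists>f. bij_betw f (verts T1) (verts T2) \<and>
          f (root T1) = root T2 \<and>
          (\<forall>u \<in> verts T1. \<forall>v \<in> verts T1. (u, v) \<in> arcs T1 \<longleftrightarrow> (f u, f v) \<in> arcs T2) \<and>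
          (\<forall>v \<in> leaves T1. label T2 (f v) = label T1 v))"

definition height :: "'a ltree \<Rightarrow> 'a \<Rightarrow> nat" where
  "height T v = Max {k. \<exists>w \<in> leaves T. (v, w) \<in> (arcs T) ^^ k}"

definition is_bottom_up :: "'a ltree \<Rightarrow> ('a \<Rightarrow> nat) \<Rightarrow> bool" where
  "is_bottom_up T l \<longleftrightarrow>
     inj_on l (verts T) \<and>
     l ` verts T \<subseteq> {1..card (verts T)} \<and>
     (\<forall>v \<in> leaves T. l v = label T v) \<and>
     (\<forall>u \<in> verts T. \<forall>v \<in> verts T. height T u < height T v \<longrightarrow> l u < l v) \<and>
     (\<forall>u \<in> verts T. \<forall>v \<in> verts T.
        0 < height T u \<and> height T u = height T v \<and>
        Min (l ` children T u) < Min (l ` children T v) \<longrightarrow> l u < l v)"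

text \<open>The bottom-up ordering (the unique such map on the vertex set; made
  canonical outside the vertex set via extensional).\<close>
definition bottom_up :: "'a ltree \<Rightarrow> 'a \<Rightarrow> nat" where
  "bottom_up T = (THE l. is_bottom_up T l \<and> l \<in> extensional (verts T))"

definition kappa :: "nat set \<Rightarrow> nat \<Rightarrow> nat" where
  "kappa S = cycle_of_list (sorted_list_of_set S)"

text \<open>Matching permutation: product over internal nodes u of kappa(l(children u)).\<close>
definition matching_perm :: "'a ltree \<Rightarrow> nat \<Rightarrow> nat" where
  "matching_perm T =
     (let l = bottom_up T in
      foldr (\<circ>)
        (map (\<lambda>k. kappa (l ` children T (inv_into (verts T) l k)))
             (sorted_list_of_set (l ` internal T)))
        id)"

end

theory Submission
  imports Defs "HOL-Combinatorics.Orbits" "HOL-Library.Product_Lexorder"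
begin

text \<open>
  The bottom-up ordering l of a phylogenetic tree with n leaves and N vertices exists and is
  unique: at an internal vertex v, l v is the number of vertices of smaller height plus the
  rank of v within its level with respect to the least child label. Leaves receive the
  labels 1..n and internal vertices n+1..N, and the cycles of the matching permutation act
  on the pairwise disjoint sets l(children u), each of size at least two. So the nontrivial
  orbits of the matching permutation are exactly these sets of sibling labels.

  This unordered family of blocks already determines which block belongs to which label:
  proceeding upwards, the heights of the blocks below k are known, and l orders internal
  vertices by the key (height, least child label), so the block of label k is forced.
  Two trees with the same matching permutation therefore have the same labelled child sets,
  and identifying vertices with equal labels is an isomorphism.
\<close>

section \<open>Products of cycles with disjoint supports\<close>

lemma kappa_permutes: "finite S \<Longrightarrow> kappa S permutes S"
  unfolding kappa_def using cycle_permutes[of "sorted_list_of_set S"] by simp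

lemma cyclic_on_kappa:
  assumes "finite S" and "S \<noteq> {}"
  shows "cyclic_on (kappa S) S"
proof -
  define cs where "cs = sorted_list_of_set S"
  have cs: "distinct cs" "set cs = S" using assms(1) by (simp_all add: cs_def)
  obtain x where x: "x \<in> S" using assms(2) by blast
  then obtain i where i: "i < length cs" "cs ! i = x" using cs(2) by (metis in_set_conv_nth)
  have "S \<subseteq> orbit (kappa S) x"
  proof
    fix y assume "y \<in> S"
    then obtain k where k: "k < length cs" "cs ! k = y" using cs(2) by (metis in_set_conv_nth)
    define j where "j = k + length cs - i"
    have "(kappa S ^^ j) x = rotate j cs ! i"
      using cyclic_rotation[OF cs(1), of j] i by (metis cs_def kappa_def nth_map)
    also have "\<dots> = y" using i k by (simp add: nth_rotate j_def)
    finally show "y \<in> orbit (kappa S) x"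
      using i unfolding orbit_altdef j_def by force
  qed
  moreover have "orbit (kappa S) x \<subseteq> S"
    using permutes_orbit_subset[OF kappa_permutes[OF assms(1)] x] .
  ultimately show ?thesis using x by (intro cyclic_on_singleI) auto
qed

definition cycle_product :: "(nat \<Rightarrow> nat set) \<Rightarrow> nat list \<Rightarrow> nat \<Rightarrow> nat" where
  "cycle_product C ks = foldr (\<circ>) (map (\<lambda>k. kappa (C k)) ks) id"

lemma cycle_product_Nil [simp]: "cycle_product C [] = id"
  by (simp add: cycle_product_def)

lemma cycle_product_Cons [simp]: "cycle_product C (k # ks) = kappa (C k) \<circ> cycle_product C ks"
  by (simp add: cycle_product_def)

lemma cycle_product_permutes:
  "(\<And>k. k \<in> set ks \<Longrightarrow> finite (C k)) \<Longrightarrow> cycle_product C ks permutes \<Union>(C ` set ks)"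
proof (induction ks)
  case (Cons a ks)
  have "cycle_product C ks permutes \<Union>(C ` set (a # ks))"
    using Cons by (auto intro: permutes_subset)
  moreover have "kappa (C a) permutes \<Union>(C ` set (a # ks))"
    using Cons.prems by (auto intro: permutes_subset kappa_permutes)
  ultimately show ?case
    unfolding cycle_product_Cons by (rule permutes_compose)
qed (simp add: permutes_id)

lemma cycle_product_on_block:
  assumes "\<And>k. k \<in> set ks \<Longrightarrow> finite (C k)" and "distinct ks"
    and "disjoint_family_on C (set ks)" and "k \<in> set ks" and "x \<in> C k"
  shows "cycle_product C ks x = kappa (C k) x"
  using assms
proof (induction ks)
  case (Cons a ks)
  show ?case
  proof (cases "k = a")
    case True
    with Cons.prems have "x \<notin> \<Union>(C ` set ks)"
      by (auto simp: disjoint_family_on_def)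
    then have "cycle_product C ks x = x"
      using cycle_product_permutes[of ks C] Cons.prems(1) by (simp add: permutes_not_in)
    then show ?thesis using True by simp
  next
    case False
    with Cons.prems have "cycle_product C ks x = kappa (C k) x"
      by (intro Cons.IH) (auto simp: disjoint_family_on_def)
    moreover have "kappa (C k) x \<notin> C a"
      using Cons.prems False permutes_in_image[OF kappa_permutes, of "C k" x]
      by (auto simp: disjoint_family_on_def)
    ultimately show ?thesis
      using kappa_permutes[of "C a"] Cons.prems(1) by (simp add: permutes_not_in)
  qed
qed simp

definition nontrivial_orbits :: "('a \<Rightarrow> 'a) \<Rightarrow> 'a set set" where
  "nontrivial_orbits p = {orbit p x | x. p x \<noteq> x}"

lemma nontrivial_orbits_cycle_product:
  assumes fin: "\<And>k. k \<in> set ks \<Longrightarrow> finite (C k)" and "distinct ks"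
    and disj: "disjoint_family_on C (set ks)" and card: "\<And>k. k \<in> set ks \<Longrightarrow> 2 \<le> card (C k)"
  shows "nontrivial_orbits (cycle_product C ks) = C ` set ks"
proof -
  let ?p = "cycle_product C ks"
  have orbit_block: "orbit ?p x = C k" if k: "k \<in> set ks" and x: "x \<in> C k" for k x
  proof -
    have cyc: "cyclic_on (kappa (C k)) (C k)"
      using fin[OF k] x by (intro cyclic_on_kappa) auto
    have on_block: "?p y = kappa (C k) y" if "y \<in> C k" for y
      using cycle_product_on_block[OF fin assms(2) disj k that] .
    have "?p \<in> C k \<rightarrow> C k"
      using on_block permutes_in_image[OF kappa_permutes[OF fin[OF k]]] by simp
    with x have "orbit ?p x = orbit (kappa (C k)) x"
      using on_block by (rule orbit_cong0)
    then show ?thesis using orbit_cyclic_eq3[OF cyc x] by simp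
  qed
  have moves: "?p x \<noteq> x" if k: "k \<in> set ks" and x: "x \<in> C k" for k x
  proof
    assume "?p x = x"
    then have "C k = {x}" using orbit_block[OF k x] orbit_eq_singleton_iff by metis
    with card[OF k] show False by simp
  qed
  have perm: "?p permutes \<Union>(C ` set ks)"
    using fin by (rule cycle_product_permutes)
  have in_block: "\<exists>k\<in>set ks. x \<in> C k" if "?p x \<noteq> x" for x
    using that permutes_not_in[OF perm, of x] by blast
  show ?thesis
  proof (intro equalityI subsetI)
    fix B assume "B \<in> nontrivial_orbits ?p"
    then obtain x where "B = orbit ?p x" "?p x \<noteq> x" by (auto simp: nontrivial_orbits_def)
    with in_block orbit_block show "B \<in> C ` set ks" by blast
  next
    fix B assume "B \<in> C ` set ks"
    then obtain k where k: "k \<in> set ks" "B = C k" by blast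
    then obtain x where "x \<in> C k" using card[OF k(1)] by fastforce
    with k orbit_block moves show "B \<in> nontrivial_orbits ?p"
      unfolding nontrivial_orbits_def by blast
  qed
qed

section \<open>Block labellings\<close>

text \<open>What the bottom-up ordering of a tree with n leaves and N vertices records: C k is
  the set of labels of the children of the vertex labelled k and H k is its height.\<close>
locale block_labelling =
  fixes n N :: nat and C :: "nat \<Rightarrow> nat set" and H :: "nat \<Rightarrow> nat"
  assumes leaf_block: "k \<in> {1..n} \<Longrightarrow> C k = {}"
    and internal_block_nonempty: "k \<in> {n<..N} \<Longrightarrow> C k \<noteq> {}"
    and internal_block_below: "k \<in> {n<..N} \<Longrightarrow> C k \<subseteq> {1..<k}"
    and H_leaf: "k \<in> {1..n} \<Longrightarrow> H k = 0"
    and H_internal: "k \<in> {n<..N} \<Longrightarrow> H k = Suc (Max (H ` C k))"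
    and less_if_key_less:
      "a \<in> {n<..N} \<Longrightarrow> b \<in> {n<..N} \<Longrightarrow> (H a, Min (C a)) < (H b, Min (C b)) \<Longrightarrow> a < b"
    and internal_blocks_disjoint: "disjoint_family_on C {n<..N}"
begin

lemma inj_on_internal_blocks: "inj_on C {n<..N}"
  using internal_blocks_disjoint internal_block_nonempty
  by (fastforce simp: inj_on_def disjoint_family_on_def)

lemma card_internal_blocks: "card (C ` {n<..N}) = N - n"
  using card_image[OF inj_on_internal_blocks] by simp

lemma key_le_if_less:
  assumes "a \<in> {n<..N}" and "b \<in> {n<..N}" and "a < b"
  shows "(H a, Min (C a)) \<le> (H b, Min (C b))"
  using less_if_key_less[OF assms(2,1)] assms(3) by (meson not_le order.asym)

end

lemma block_index_not_below:
  assumes L': "block_labelling n N C' H'" and k: "k \<in> {n<..N}" and k': "k' \<in> {n<..N}"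
    and block: "C k' = C' k" and below: "\<And>j. j \<in> {1..<k} \<Longrightarrow> C j = C' j"
  shows "k \<le> k'"
proof (rule ccontr)
  assume "\<not> k \<le> k'"
  with below[of k'] k' block have "C' k' = C' k" by auto
  with block_labelling.inj_on_internal_blocks[OF L'] k k' \<open>\<not> k \<le> k'\<close> show False
    by (auto dest: inj_onD)
qed

text \<open>The block labelled k in either labelling sits at a label not below k in the other;
  comparing keys in both labellings then forces the two blocks to share their minimum, so
  by disjointness they coincide.\<close>
lemma block_labelling_eq_if_eq_below:
  assumes L: "block_labelling n N C H" and L': "block_labelling n N C' H'"
    and blocks: "C ` {n<..N} = C' ` {n<..N}" and k: "k \<in> {n<..N}"
    and below: "\<And>j. j \<in> {1..<k} \<Longrightarrow> C j = C' j \<and> H j = H' j"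
  shows "C k = C' k"
proof (rule ccontr)
  interpret L: block_labelling n N C H by (fact L)
  interpret L': block_labelling n N C' H' by (fact L')
  assume differ: "C k \<noteq> C' k"
  have H_eq_on: "H ` B = H' ` B" if "B \<subseteq> {1..<k}" for B
    by (intro image_cong refl) (use below that in auto)
  have "C k \<in> C' ` {n<..N}" and "C' k \<in> C ` {n<..N}"
    using k blocks by blast+
  then obtain k' k'' where k': "k' \<in> {n<..N}" "C' k' = C k" and k'': "k'' \<in> {n<..N}" "C k'' = C' k"
    by (metis imageE)
  have "k \<le> k'" and "k \<le> k''"
    using block_index_not_below[where C = C', OF L k k']
      block_index_not_below[where C = C, OF L' k k''] below by auto
  with differ k'(2) k''(2) have "k < k'" and "k < k''"
    by (auto simp: le_less)
  have "H' k' = H k"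
    using L'.H_internal[OF k'(1)] L.H_internal[OF k] k'(2) H_eq_on L.internal_block_below[OF k]
    by simp
  with L'.key_le_if_less[OF k k'(1) \<open>k < k'\<close>] k'(2)
  have "(H' k, Min (C' k)) \<le> (H k, Min (C k))" by simp
  moreover have "H k'' = H' k"
    using L.H_internal[OF k''(1)] L'.H_internal[OF k] k''(2) H_eq_on L'.internal_block_below[OF k]
    by simp
  with L.key_le_if_less[OF k k''(1) \<open>k < k''\<close>] k''(2)
  have "(H k, Min (C k)) \<le> (H' k, Min (C' k))" by simp
  ultimately have "Min (C k) = Min (C k'')"
    using k''(2) by (metis antisym prod.inject)
  moreover have min_in: "Min (C j) \<in> C j" if "j \<in> {n<..N}" for j
    using L.internal_block_nonempty[OF that] finite_subset[OF L.internal_block_below[OF that]]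
    by simp
  ultimately have "Min (C k) \<in> C k \<inter> C k''"
    using k k''(1) by (metis IntI)
  moreover have "C k \<inter> C k'' = {}"
    using disjoint_family_onD[OF L.internal_blocks_disjoint k k''(1)] \<open>k < k''\<close> by simp
  ultimately show False by simp
qed

lemma block_labelling_unique:
  assumes L: "block_labelling n N C H" and L': "block_labelling n N C' H'"
    and blocks: "C ` {n<..N} = C' ` {n<..N}"
  shows "k \<in> {1..N} \<Longrightarrow> C k = C' k \<and> H k = H' k"
proof (induction k rule: less_induct)
  case (less k)
  interpret L: block_labelling n N C H by (fact L)
  interpret L': block_labelling n N C' H' by (fact L')
  show ?case
  proof (cases "k \<le> n")
    case True
    with less.prems show ?thesis using L.leaf_block L'.leaf_block L.H_leaf L'.H_leaf by auto
  next
    case False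
    with less.prems have k: "k \<in> {n<..N}" by auto
    have below: "C j = C' j \<and> H j = H' j" if "j \<in> {1..<k}" for j
      using less.IH that k by auto
    then have "C k = C' k"
      by (rule block_labelling_eq_if_eq_below[OF L L' blocks k])
    moreover have "H ` C k = H' ` C k"
      using below L.internal_block_below[OF k] by (intro image_cong refl) auto
    ultimately show ?thesis
      using L.H_internal[OF k] L'.H_internal[OF k] by simp
  qed
qed

section \<open>Phylogenetic trees and their bottom-up ordering\<close>

lemma card_le_eq_of_bij:
  fixes l :: "'a \<Rightarrow> nat"
  assumes bij: "bij_betw l A {1..m}" and v: "v \<in> A"
  shows "card {u \<in> A. l u \<le> l v} = l v"
proof -
  have "l ` {u \<in> A. l u \<le> l v} = {1..l v}"
  proof (intro equalityI subsetI)
    fix x assume "x \<in> {1..l v}"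
    moreover have "l v \<le> m" using bij v by (auto simp: bij_betw_def)
    ultimately have "x \<in> l ` A" using bij by (auto simp: bij_betw_def)
    with \<open>x \<in> {1..l v}\<close> show "x \<in> l ` {u \<in> A. l u \<le> l v}" by auto
  qed (use bij in \<open>auto simp: bij_betw_def\<close>)
  moreover have "inj_on l {u \<in> A. l u \<le> l v}"
    using bij by (auto simp: bij_betw_def intro: inj_on_subset)
  ultimately show ?thesis
    by (metis card_atLeastAtMost card_image diff_Suc_1)
qed

lemma card_le_less_card_le:
  fixes f :: "'a \<Rightarrow> 'b :: linorder"
  assumes "finite A" and "v \<in> A" and "f u < f v"
  shows "card {w \<in> A. f w \<le> f u} < card {w \<in> A. f w \<le> f v}"
proof (rule psubset_card_mono)
  have "v \<in> {w \<in> A. f w \<le> f v}" and "v \<notin> {w \<in> A. f w \<le> f u}"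
    using assms(2,3) by auto
  moreover have "{w \<in> A. f w \<le> f u} \<subseteq> {w \<in> A. f w \<le> f v}"
    using assms(3) by auto
  ultimately show "{w \<in> A. f w \<le> f u} \<subset> {w \<in> A. f w \<le> f v}" by blast
qed (use assms(1) in simp)

lemma is_bottom_up_less_height:
  "is_bottom_up T l \<Longrightarrow> u \<in> verts T \<Longrightarrow> v \<in> verts T \<Longrightarrow> height T u < height T v \<Longrightarrow> l u < l v"
  by (simp add: is_bottom_up_def)

lemma is_bottom_up_less_Min:
  "is_bottom_up T l \<Longrightarrow> u \<in> verts T \<Longrightarrow> v \<in> verts T \<Longrightarrow> 0 < height T u \<Longrightarrow>
    height T u = height T v \<Longrightarrow> Min (l ` children T u) < Min (l ` children T v) \<Longrightarrow> l u < l v"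
  unfolding is_bottom_up_def by blast

fun level_labels :: "'a ltree \<Rightarrow> nat \<Rightarrow> 'a \<Rightarrow> nat" where
  "level_labels T 0 v = label T v"
| "level_labels T (Suc h) v =
    (if height T v = Suc h then
       card {u \<in> verts T. height T u < Suc h} +
       card {u \<in> verts T. height T u = Suc h \<and>
               Min (level_labels T h ` children T u) \<le> Min (level_labels T h ` children T v)}
     else level_labels T h v)"

locale phylo =
  fixes n :: nat and T :: "'a ltree"
  assumes phylo_tree: "phylo_tree n T"
begin

lemma finite_verts: "finite (verts T)"
  and arcs_subset: "arcs T \<subseteq> verts T \<times> verts T"
  and root_in_verts: "root T \<in> verts T"
  and no_arc_to_root: "(v, root T) \<notin> arcs T"
  and unique_parent: "v \<in> verts T - {root T} \<Longrightarrow> \<exists>!u. (u, v) \<in> arcs T"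
  and card_children_ne_1: "u \<in> verts T \<Longrightarrow> card (children T u) \<noteq> 1"
  and bij_label: "bij_betw (label T) (leaves T) {1..n}"
  using phylo_tree unfolding phylo_tree_def by blast+

lemma arc_in_verts: "(u, v) \<in> arcs T \<Longrightarrow> u \<in> verts T \<and> v \<in> verts T"
  using arcs_subset by blast

lemma parent_unique: "(u, v) \<in> arcs T \<Longrightarrow> (u', v) \<in> arcs T \<Longrightarrow> u = u'"
  using unique_parent arc_in_verts no_arc_to_root by blast

lemma children_subset: "children T u \<subseteq> verts T"
  using arcs_subset by (auto simp: children_def)

lemma finite_children: "finite (children T u)"
  using children_subset finite_verts by (rule finite_subset)

lemma children_disjoint: "u \<noteq> u' \<Longrightarrow> children T u \<inter> children T u' = {}"
  using parent_unique by (auto simp: children_def)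

lemma leaves_subset: "leaves T \<subseteq> verts T"
  by (auto simp: leaves_def)

lemma path_in_verts: "(v, w) \<in> arcs T ^^ k \<Longrightarrow> v \<in> verts T \<Longrightarrow> w \<in> verts T"
  by (cases k) (auto elim: relpow_Suc_E dest: arc_in_verts)

lemma root_path_length_unique:
  "(root T, v) \<in> arcs T ^^ k \<Longrightarrow> (root T, v) \<in> arcs T ^^ j \<Longrightarrow> k = j"
proof (induction k arbitrary: v j)
  case 0
  then show ?case using no_arc_to_root by (cases j) (auto elim: relpow_Suc_E)
next
  case (Suc k)
  then obtain u where u: "(root T, u) \<in> arcs T ^^ k" "(u, v) \<in> arcs T"
    by (auto elim: relpow_Suc_E)
  with Suc.prems(2) obtain j' u' where "j = Suc j'" "(root T, u') \<in> arcs T ^^ j'" "(u', v) \<in> arcs T"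
    using no_arc_to_root by (cases j) (auto elim: relpow_Suc_E)
  with u parent_unique Suc.IH show ?case by blast
qed

text \<open>Every path extends to a path from the root, whose length is unique; hence path
  lengths are bounded by the largest depth.\<close>
lemma finite_path_lengths:
  assumes v: "v \<in> verts T"
  shows "finite {k. \<exists>w. (v, w) \<in> arcs T ^^ k}"
proof -
  define depth where "depth w = (THE k. (root T, w) \<in> arcs T ^^ k)" for w
  obtain m where m: "(root T, v) \<in> arcs T ^^ m"
    using phylo_tree v unfolding phylo_tree_def by (auto simp: rtrancl_power)
  have "k \<le> Max (depth ` verts T)" if path: "(v, w) \<in> arcs T ^^ k" for w k
  proof -
    from m path have "(root T, w) \<in> arcs T ^^ (m + k)" by (auto simp: relpow_add)
    then have "depth w = m + k"
      unfolding depth_def using root_path_length_unique by blast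
    moreover have "depth w \<le> Max (depth ` verts T)"
      using finite_verts path_in_verts[OF path v] by simp
    ultimately show ?thesis by simp
  qed
  then show ?thesis
    by (intro bounded_nat_set_is_finite[where n = "Suc (Max (depth ` verts T))"])
      (auto simp: less_Suc_eq_le)
qed

lemma finite_leaf_distances: "v \<in> verts T \<Longrightarrow> finite {k. \<exists>w\<in>leaves T. (v, w) \<in> arcs T ^^ k}"
  by (rule finite_subset[OF _ finite_path_lengths]) auto

lemma leaf_below: "v \<in> verts T \<Longrightarrow> \<exists>k. \<exists>w\<in>leaves T. (v, w) \<in> arcs T ^^ k"
proof -
  assume v: "v \<in> verts T"
  define k where "k = Max {k. \<exists>w. (v, w) \<in> arcs T ^^ k}"
  have "(v, v) \<in> arcs T ^^ 0" by simp
  then have "k \<in> {k. \<exists>w. (v, w) \<in> arcs T ^^ k}"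
    and k_max: "\<And>w j. (v, w) \<in> arcs T ^^ j \<Longrightarrow> j \<le> k"
    unfolding k_def using Max_in Max_ge finite_path_lengths[OF v] by blast+
  then obtain w where w: "(v, w) \<in> arcs T ^^ k" by blast
  have "children T w = {}"
  proof (rule ccontr)
    assume "children T w \<noteq> {}"
    then obtain c where "(w, c) \<in> arcs T" by (auto simp: children_def)
    from k_max[OF relpow_Suc_I[OF w this]] show False by simp
  qed
  then have "w \<in> leaves T" using path_in_verts[OF w v] by (simp add: leaves_def)
  with w show ?thesis by blast
qed

lemma height_leaf_distance: "v \<in> verts T \<Longrightarrow> \<exists>w\<in>leaves T. (v, w) \<in> arcs T ^^ height T v"
  using Max_in[OF finite_leaf_distances] leaf_below unfolding height_def by blast

lemma leaf_distance_le_height: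
  "v \<in> verts T \<Longrightarrow> w \<in> leaves T \<Longrightarrow> (v, w) \<in> arcs T ^^ k \<Longrightarrow> k \<le> height T v"
  unfolding height_def using finite_leaf_distances by (intro Max_ge) auto

lemma height_arc_less: "(u, c) \<in> arcs T \<Longrightarrow> height T c < height T u"
proof -
  assume arc: "(u, c) \<in> arcs T"
  then obtain w where w: "w \<in> leaves T" "(c, w) \<in> arcs T ^^ height T c"
    using height_leaf_distance arc_in_verts by blast
  with arc have "(u, w) \<in> arcs T ^^ Suc (height T c)"
    by (intro relpow_Suc_I2)
  with w(1) arc show ?thesis
    using leaf_distance_le_height arc_in_verts by (metis Suc_le_eq)
qed

lemma height_leaf: "v \<in> leaves T \<Longrightarrow> height T v = 0"
proof -
  assume v: "v \<in> leaves T"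
  then obtain w where "(v, w) \<in> arcs T ^^ height T v"
    using height_leaf_distance leaves_subset by blast
  moreover have "(v, w) \<notin> arcs T ^^ Suc j" for w j
    using v relpow_Suc_D2 by (fastforce simp: leaves_def children_def)
  ultimately show ?thesis by (cases "height T v") auto
qed

lemma height_internal:
  assumes u: "u \<in> verts T" and "children T u \<noteq> {}"
  shows "height T u = Suc (Max (height T ` children T u))"
proof -
  obtain w where w: "w \<in> leaves T" "(u, w) \<in> arcs T ^^ height T u"
    using height_leaf_distance u by blast
  have "height T u \<noteq> 0"
    using w assms by (auto simp: leaves_def)
  then obtain j where j: "height T u = Suc j" by (cases "height T u") auto
  with w(2) obtain c where c: "(u, c) \<in> arcs T" "(c, w) \<in> arcs T ^^ j"
    using relpow_Suc_D2 by metis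
  then have "j \<le> height T c"
    using leaf_distance_le_height w(1) arc_in_verts by blast
  also have "height T c \<le> Max (height T ` children T u)"
    using c finite_children by (simp add: children_def)
  finally have "height T u \<le> Suc (Max (height T ` children T u))"
    using j by simp
  moreover have "Max (height T ` children T u) < height T u"
    using assms finite_children height_arc_less by (simp add: children_def)
  ultimately show ?thesis by simp
qed

lemma children_below:
  assumes "height T u < Suc h"
  shows "children T u \<subseteq> {v \<in> verts T. height T v < h}"
proof
  fix c assume c: "c \<in> children T u"
  then have "height T c < height T u"
    by (intro height_arc_less) (simp add: children_def)
  with assms c children_subset show "c \<in> {v \<in> verts T. height T v < h}"
    by auto
qed

lemma height_eq_0_iff: "v \<in> verts T \<Longrightarrow> height T v = 0 \<longleftrightarrow> v \<in> leaves T"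
  using height_leaf height_internal by (fastforce simp: leaves_def)

lemma children_empty_iff: "v \<in> verts T \<Longrightarrow> children T v = {} \<longleftrightarrow> height T v = 0"
  using height_eq_0_iff[of v] by (simp add: leaves_def)

lemma internal_iff: "u \<in> internal T \<longleftrightarrow> u \<in> verts T \<and> children T u \<noteq> {}"
  by (auto simp: internal_def leaves_def)

lemma two_le_card_children: "u \<in> internal T \<Longrightarrow> 2 \<le> card (children T u)"
  using card_children_ne_1[of u] card_0_eq[OF finite_children, of u] by (auto simp: internal_iff)

lemma card_verts: "card (verts T) = n + card (internal T)"
proof -
  have "card (leaves T) = n"
    using bij_betw_same_card[OF bij_label] by simp
  moreover have "card (internal T) = card (verts T) - card (leaves T)"
    unfolding internal_def using leaves_subset finite_verts
    by (simp add: card_Diff_subset finite_subset)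
  moreover have "card (leaves T) \<le> card (verts T)"
    using leaves_subset finite_verts by (rule card_mono[rotated])
  ultimately show ?thesis by simp
qed

text \<open>Every non-root vertex is the child of exactly one internal vertex, and internal
  vertices have at least two children.\<close>
lemma card_verts_less: "card (verts T) < 2 * n"
proof -
  have partition: "verts T - {root T} = (\<Union>u\<in>internal T. children T u)"
  proof (intro equalityI subsetI)
    fix v assume "v \<in> verts T - {root T}"
    then obtain u where arc: "(u, v) \<in> arcs T" using unique_parent by blast
    then have "u \<in> internal T" and "v \<in> children T u"
      using arc_in_verts by (auto simp: internal_iff children_def)
    then show "v \<in> (\<Union>u\<in>internal T. children T u)" by blast
  qed (use children_subset no_arc_to_root in \<open>auto simp: children_def\<close>)
  have "2 * card (internal T) = (\<Sum>u\<in>internal T. 2)" by simp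
  also have "\<dots> \<le> (\<Sum>u\<in>internal T. card (children T u))"
    by (intro sum_mono two_le_card_children)
  also have "\<dots> = card (verts T - {root T})"
    unfolding partition using finite_verts finite_children children_disjoint
    by (intro card_UN_disjoint[symmetric]) (auto simp: internal_def)
  also have "\<dots> < card (verts T)"
    using finite_verts root_in_verts by (rule card_Diff1_less)
  finally show ?thesis using card_verts by simp
qed

lemma Min_children_neq:
  assumes inj: "inj_on l (children T u \<union> children T v)"
    and "children T u \<noteq> {}" and "children T v \<noteq> {}" and "u \<noteq> v"
  shows "Min (l ` children T u) \<noteq> Min (l ` children T v)"
proof
  assume eq: "Min (l ` children T u) = Min (l ` children T v)"
  have "Min (l ` children T w) \<in> l ` children T w" if "children T w \<noteq> {}" for w
    using that finite_children by simp
  then obtain x y where x: "x \<in> children T u" and y: "y \<in> children T v" and "l x = l y"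
    using assms(2,3) eq by (metis imageE)
  with inj have "x = y" by (auto dest: inj_onD)
  with x y children_disjoint[OF assms(4)] show False by blast
qed

lemma is_bottom_up_bij:
  assumes "is_bottom_up T l"
  shows "bij_betw l (verts T) {1..card (verts T)}"
proof -
  have inj: "inj_on l (verts T)" and range: "l ` verts T \<subseteq> {1..card (verts T)}"
    using assms unfolding is_bottom_up_def by blast+
  then have "l ` verts T = {1..card (verts T)}"
    by (intro card_subset_eq) (simp_all add: card_image)
  with inj show ?thesis by (simp add: bij_betw_def)
qed

lemma is_bottom_up_le_iff_Min:
  assumes l: "is_bottom_up T l" and u: "u \<in> verts T" and v: "v \<in> verts T"
    and pos: "0 < height T v" and same: "height T u = height T v" and "u \<noteq> v"
  shows "l u \<le> l v \<longleftrightarrow> Min (l ` children T u) \<le> Min (l ` children T v)"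
proof -
  have "inj_on l (children T u \<union> children T v)"
    by (rule inj_on_subset[OF bij_betw_imp_inj_on[OF is_bottom_up_bij[OF l]]])
      (use children_subset in blast)
  moreover have "children T u \<noteq> {}" and "children T v \<noteq> {}"
    using u v same pos by (simp_all add: children_empty_iff)
  ultimately have "Min (l ` children T u) \<noteq> Min (l ` children T v)"
    using \<open>u \<noteq> v\<close> by (rule Min_children_neq)
  then show ?thesis
  proof (rule linorder_neqE_nat)
    assume less: "Min (l ` children T u) < Min (l ` children T v)"
    with pos same have "l u < l v" by (intro is_bottom_up_less_Min[OF l u v]) simp_all
    with less show ?thesis by (simp add: less_imp_le)
  next
    assume less: "Min (l ` children T v) < Min (l ` children T u)"
    with pos same have "l v < l u" by (intro is_bottom_up_less_Min[OF l v u]) simp_all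
    with less show ?thesis by (simp add: leD)
  qed
qed

text \<open>Counting the labels below l v recovers l v, because l is a bijection onto an
  initial segment.\<close>
lemma bottom_up_eq:
  assumes l: "is_bottom_up T l" and v: "v \<in> verts T" and pos: "0 < height T v"
  shows "l v = card {u \<in> verts T. height T u < height T v} +
    card {u \<in> verts T. height T u = height T v \<and> Min (l ` children T u) \<le> Min (l ` children T v)}"
proof -
  have "l u \<le> l v \<longleftrightarrow> height T u < height T v \<or>
      height T u = height T v \<and> Min (l ` children T u) \<le> Min (l ` children T v)"
    if u: "u \<in> verts T" for u
  proof (cases rule: linorder_cases[of "height T u" "height T v"])
    case less
    with is_bottom_up_less_height[OF l u v] show ?thesis by simp
  next
    case equal
    with is_bottom_up_le_iff_Min[OF l u v pos] show ?thesis by (cases "u = v") simp_all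
  next
    case greater
    with is_bottom_up_less_height[OF l v u] show ?thesis by simp
  qed
  then have level_split: "{u \<in> verts T. l u \<le> l v} = {u \<in> verts T. height T u < height T v} \<union>
    {u \<in> verts T. height T u = height T v \<and> Min (l ` children T u) \<le> Min (l ` children T v)}"
    by blast
  have "l v = card {u \<in> verts T. l u \<le> l v}"
    using card_le_eq_of_bij[OF is_bottom_up_bij[OF l] v] by simp
  also have "\<dots> = card {u \<in> verts T. height T u < height T v} +
    card {u \<in> verts T. height T u = height T v \<and> Min (l ` children T u) \<le> Min (l ` children T v)}"
    unfolding level_split by (rule card_Un_disjoint) (use finite_verts in auto)
  finally show ?thesis .
qed

lemma bottom_up_unique:
  assumes "is_bottom_up T l" and "is_bottom_up T l'" and "v \<in> verts T"
  shows "l v = l' v"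
  using assms(3)
proof (induction "height T v" arbitrary: v rule: less_induct)
  case less
  show ?case
  proof (cases "height T v = 0")
    case True
    then show ?thesis
      using assms(1,2) height_eq_0_iff less.prems by (simp add: is_bottom_up_def)
  next
    case False
    have "l c = l' c" if "c \<in> children T u" and "height T u = height T v" for u c
      using less.hyps[of c] height_arc_less[of u c] arc_in_verts[of u c] that
      by (simp add: children_def)
    then have "Min (l ` children T u) = Min (l' ` children T u)" if "height T u = height T v" for u
      using that by (simp cong: image_cong)
    then show ?thesis
      using bottom_up_eq[OF assms(1) less.prems] bottom_up_eq[OF assms(2) less.prems] False
      by (simp cong: conj_cong)
  qed
qed

definition canonical_label :: "'a \<Rightarrow> nat" where
  "canonical_label v = level_labels T (height T v) v"

lemma level_labels_stable: "height T v \<le> h \<Longrightarrow> level_labels T h v = canonical_label v"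
  by (induction h) (auto simp: canonical_label_def le_Suc_eq)

lemma canonical_label_leaf: "v \<in> leaves T \<Longrightarrow> canonical_label v = label T v"
  by (simp add: canonical_label_def height_leaf)

lemma canonical_label_internal:
  assumes "0 < height T v"
  shows "canonical_label v = card {u \<in> verts T. height T u < height T v} +
    card {u \<in> verts T. height T u = height T v \<and>
      Min (canonical_label ` children T u) \<le> Min (canonical_label ` children T v)}"
proof -
  obtain h where h: "height T v = Suc h" using assms by (cases "height T v") auto
  have children_stable: "level_labels T h ` children T u = canonical_label ` children T u"
    if "height T u = Suc h" for u
  proof (rule image_cong[OF refl])
    fix c assume "c \<in> children T u"
    with that height_arc_less[of u c] show "level_labels T h c = canonical_label c"
      by (intro level_labels_stable) (simp add: children_def)
  qed
  show ?thesis
    unfolding canonical_label_def[of v] h level_labels.simps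
    using children_stable[OF h] by (simp add: children_stable cong: conj_cong)
qed

lemma canonical_label_less_Min:
  assumes u: "u \<in> verts T" and v: "v \<in> verts T" and pos: "0 < height T u"
    and same: "height T u = height T v"
    and less: "Min (canonical_label ` children T u) < Min (canonical_label ` children T v)"
  shows "canonical_label u < canonical_label v"
proof -
  have "card {w \<in> {w \<in> verts T. height T w = height T v}.
          Min (canonical_label ` children T w) \<le> Min (canonical_label ` children T u)}
      < card {w \<in> {w \<in> verts T. height T w = height T v}.
          Min (canonical_label ` children T w) \<le> Min (canonical_label ` children T v)}"
    using finite_verts v less by (intro card_le_less_card_le) auto
  then show ?thesis
    using canonical_label_internal[of u] canonical_label_internal[of v] pos same
    by (simp add: conj_commute)
qed

lemma canonical_label_gt:
  assumes pos: "0 < height T v" and v: "v \<in> verts T"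
  shows "card {u \<in> verts T. height T u < height T v} < canonical_label v"
proof -
  have "v \<in> {u \<in> verts T. height T u = height T v \<and>
      Min (canonical_label ` children T u) \<le> Min (canonical_label ` children T v)}"
    using v by simp
  then have "0 < card {u \<in> verts T. height T u = height T v \<and>
      Min (canonical_label ` children T u) \<le> Min (canonical_label ` children T v)}"
    using finite_verts by (auto simp: card_gt_0_iff)
  then show ?thesis
    using canonical_label_internal[OF pos] by simp
qed

lemma canonical_label_pos: "v \<in> verts T \<Longrightarrow> 0 < canonical_label v"
proof (cases "height T v = 0")
  case True
  assume "v \<in> verts T"
  with True have "v \<in> leaves T" by (simp add: height_eq_0_iff)
  then show ?thesis
    using bij_label canonical_label_leaf by (force simp: bij_betw_def)
next
  case False
  assume "v \<in> verts T"
  with False canonical_label_gt[of v] show ?thesis by simp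
qed

lemma canonical_label_le: "v \<in> verts T \<Longrightarrow>
    canonical_label v \<le> card {u \<in> verts T. height T u \<le> height T v}"
proof (cases "height T v = 0")
  case True
  assume v: "v \<in> verts T"
  with True have leaf: "v \<in> leaves T" by (simp add: height_eq_0_iff)
  have "{u \<in> verts T. height T u \<le> height T v} = leaves T"
    using True leaves_subset height_eq_0_iff by auto
  moreover have "card (leaves T) = n"
    using bij_betw_same_card[OF bij_label] by simp
  moreover have "label T v \<le> n"
    using bij_label leaf by (auto simp: bij_betw_def)
  ultimately show ?thesis using canonical_label_leaf[OF leaf] by simp
next
  case False
  have "{u \<in> verts T. height T u \<le> height T v} =
      {u \<in> verts T. height T u < height T v} \<union> {u \<in> verts T. height T u = height T v}"
    by auto
  then have "card {u \<in> verts T. height T u \<le> height T v} =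
      card {u \<in> verts T. height T u < height T v} + card {u \<in> verts T. height T u = height T v}"
    by (simp only:) (rule card_Un_disjoint, use finite_verts in auto)
  moreover have "card {u \<in> verts T. height T u = height T v \<and>
      Min (canonical_label ` children T u) \<le> Min (canonical_label ` children T v)}
    \<le> card {u \<in> verts T. height T u = height T v}"
    using finite_verts by (intro card_mono) auto
  ultimately show ?thesis
    using canonical_label_internal False by simp
qed

lemma canonical_label_less_height:
  assumes u: "u \<in> verts T" and v: "v \<in> verts T" and less: "height T u < height T v"
  shows "canonical_label u < canonical_label v"
proof -
  have "canonical_label u \<le> card {w \<in> verts T. height T w \<le> height T u}"
    using u by (rule canonical_label_le)
  also have "\<dots> \<le> card {w \<in> verts T. height T w < height T v}"
    using finite_verts less by (intro card_mono) auto
  also have "\<dots> < canonical_label v"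
    using less v by (intro canonical_label_gt) auto
  finally show ?thesis .
qed

lemma inj_on_canonical_label_below: "inj_on canonical_label {v \<in> verts T. height T v < h}"
proof (induction h)
  case (Suc h)
  show ?case
  proof (rule inj_onI)
    fix u v
    assume u: "u \<in> {v \<in> verts T. height T v < Suc h}" and v: "v \<in> {v \<in> verts T. height T v < Suc h}"
      and eq: "canonical_label u = canonical_label v"
    then have same: "height T u = height T v"
      using canonical_label_less_height
      by (metis (mono_tags) mem_Collect_eq less_irrefl linorder_neqE_nat)
    show "u = v"
    proof (cases "height T u = 0")
      case True
      with u v same have "u \<in> leaves T" "v \<in> leaves T" by (simp_all add: height_eq_0_iff)
      with eq bij_label show ?thesis
        by (simp add: canonical_label_leaf bij_betw_def inj_on_def)
    next
      case False
      show ?thesis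
      proof (rule ccontr)
        assume "u \<noteq> v"
        from u v have "children T u \<union> children T v \<subseteq> {v \<in> verts T. height T v < h}"
          using children_below[of u h] children_below[of v h] by simp
        then have "inj_on canonical_label (children T u \<union> children T v)"
          using Suc.IH by (rule inj_on_subset[rotated])
        moreover have "children T u \<noteq> {}" and "children T v \<noteq> {}"
          using u v same False by (simp_all add: children_empty_iff)
        ultimately have
          "Min (canonical_label ` children T u) \<noteq> Min (canonical_label ` children T v)"
          using \<open>u \<noteq> v\<close> by (rule Min_children_neq)
        then show False
          using canonical_label_less_Min[of u v] canonical_label_less_Min[of v u] u v same False eq
          by (metis linorder_neqE_nat mem_Collect_eq neq0_conv less_irrefl)
      qed
    qed
  qed
qed simp

lemma is_bottom_up_canonical_label: "is_bottom_up T canonical_label"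
  unfolding is_bottom_up_def
proof (intro conjI ballI impI)
  have "{v \<in> verts T. height T v < Suc (Max (height T ` verts T))} = verts T"
    using finite_verts by (auto simp: less_Suc_eq_le)
  then show "inj_on canonical_label (verts T)"
    using inj_on_canonical_label_below[of "Suc (Max (height T ` verts T))"] by simp
  show "canonical_label ` verts T \<subseteq> {1..card (verts T)}"
  proof (rule image_subsetI)
    fix v assume v: "v \<in> verts T"
    have "canonical_label v \<le> card {u \<in> verts T. height T u \<le> height T v}"
      using v by (rule canonical_label_le)
    also have "\<dots> \<le> card (verts T)"
      using finite_verts by (intro card_mono) auto
    finally show "canonical_label v \<in> {1..card (verts T)}"
      using canonical_label_pos[OF v] by simp
  qed
  show "canonical_label v = label T v" if "v \<in> leaves T" for v
    using that by (rule canonical_label_leaf)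
  show "canonical_label u < canonical_label v"
    if "u \<in> verts T" "v \<in> verts T" "height T u < height T v" for u v
    using that by (rule canonical_label_less_height)
  show "canonical_label u < canonical_label v"
    if "u \<in> verts T" "v \<in> verts T" and "0 < height T u \<and> height T u = height T v \<and>
      Min (canonical_label ` children T u) < Min (canonical_label ` children T v)" for u v
    using that(3) by (elim conjE) (rule canonical_label_less_Min[OF that(1,2)])
qed

lemma is_bottom_up_cong:
  assumes l: "is_bottom_up T l" and eq: "\<And>v. v \<in> verts T \<Longrightarrow> l v = l' v"
  shows "is_bottom_up T l'"
proof -
  have inj: "inj_on l (verts T)" and
    range: "l ` verts T \<subseteq> {1..card (verts T)}" and
    leaf: "\<And>v. v \<in> leaves T \<Longrightarrow> l v = label T v" and
    less_height: "\<And>u v. u \<in> verts T \<Longrightarrow> v \<in> verts T \<Longrightarrow> height T u < height T v \<Longrightarrow> l u < l v" and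
    less_Min: "\<And>u v. u \<in> verts T \<Longrightarrow> v \<in> verts T \<Longrightarrow> 0 < height T u \<and> height T u = height T v \<and>
      Min (l ` children T u) < Min (l ` children T v) \<Longrightarrow> l u < l v"
    using l unfolding is_bottom_up_def by blast+
  have children: "l ` children T u = l' ` children T u" for u
    using children_subset eq by (intro image_cong) auto
  show ?thesis
    unfolding is_bottom_up_def
  proof (intro conjI ballI impI)
    show "inj_on l' (verts T)" using inj eq by (simp cong: inj_on_cong)
    show "l' ` verts T \<subseteq> {1..card (verts T)}" using range eq by (simp cong: image_cong)
    show "l' v = label T v" if "v \<in> leaves T" for v
      using that leaf eq leaves_subset by force
    show "l' u < l' v" if "u \<in> verts T" "v \<in> verts T" "height T u < height T v" for u v
      using that less_height eq by force
    show "l' u < l' v" if "u \<in> verts T" "v \<in> verts T"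
      and "0 < height T u \<and> height T u = height T v \<and>
        Min (l' ` children T u) < Min (l' ` children T v)" for u v
      using that less_Min[of u v] eq unfolding children by force
  qed
qed

lemma is_bottom_up_bottom_up: "is_bottom_up T (bottom_up T)"
proof -
  have "\<exists>!l. is_bottom_up T l \<and> l \<in> extensional (verts T)"
  proof
    show "is_bottom_up T (restrict canonical_label (verts T)) \<and>
        restrict canonical_label (verts T) \<in> extensional (verts T)"
      using is_bottom_up_cong[OF is_bottom_up_canonical_label] by simp
    fix l assume "is_bottom_up T l \<and> l \<in> extensional (verts T)"
    then show "l = restrict canonical_label (verts T)"
      using bottom_up_unique[OF _ is_bottom_up_canonical_label] by (intro extensionalityI) auto
  qed
  then show ?thesis
    unfolding bottom_up_def by (rule theI'[THEN conjunct1])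
qed

lemma bij_bottom_up: "bij_betw (bottom_up T) (verts T) {1..card (verts T)}"
  using is_bottom_up_bottom_up by (rule is_bottom_up_bij)

lemma inj_on_bottom_up: "inj_on (bottom_up T) (verts T)"
  using bij_bottom_up by (rule bij_betw_imp_inj_on)

lemma bottom_up_in_range: "v \<in> verts T \<Longrightarrow> bottom_up T v \<in> {1..card (verts T)}"
  using bij_bottom_up by (auto simp: bij_betw_def)

lemma bottom_up_leaf: "v \<in> leaves T \<Longrightarrow> bottom_up T v = label T v"
  using is_bottom_up_bottom_up by (simp add: is_bottom_up_def)

lemmas bottom_up_less_height = is_bottom_up_less_height[OF is_bottom_up_bottom_up]

lemmas bottom_up_less_Min = is_bottom_up_less_Min[OF is_bottom_up_bottom_up]

lemma bottom_up_leaves: "bottom_up T ` leaves T = {1..n}"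
  using bij_betw_imp_surj_on[OF bij_label] bottom_up_leaf by (simp cong: image_cong)

lemma bottom_up_internal: "bottom_up T ` internal T = {n<..card (verts T)}"
proof -
  have "bottom_up T ` internal T = bottom_up T ` verts T - bottom_up T ` leaves T"
    unfolding internal_def using bij_bottom_up leaves_subset
    by (intro inj_on_image_set_diff) (auto simp: bij_betw_def)
  then show ?thesis
    using bij_bottom_up bottom_up_leaves by (auto simp: bij_betw_def)
qed

subsection \<open>Reading the tree off its labelled child sets\<close>

definition vertex_of :: "nat \<Rightarrow> 'a" where
  "vertex_of k = inv_into (verts T) (bottom_up T) k"

definition child_labels :: "nat \<Rightarrow> nat set" where
  "child_labels k = bottom_up T ` children T (vertex_of k)"

definition label_height :: "nat \<Rightarrow> nat" where
  "label_height k = height T (vertex_of k)"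

lemma vertex_of_bottom_up: "v \<in> verts T \<Longrightarrow> vertex_of (bottom_up T v) = v"
  using bij_bottom_up by (simp add: vertex_of_def bij_betw_def)

lemma child_labels_bottom_up:
  "v \<in> verts T \<Longrightarrow> child_labels (bottom_up T v) = bottom_up T ` children T v"
  by (simp add: child_labels_def vertex_of_bottom_up)

lemma label_height_bottom_up: "v \<in> verts T \<Longrightarrow> label_height (bottom_up T v) = height T v"
  by (simp add: label_height_def vertex_of_bottom_up)

lemma arc_iff_child_label:
  assumes "u \<in> verts T" and "v \<in> verts T"
  shows "(u, v) \<in> arcs T \<longleftrightarrow> bottom_up T v \<in> child_labels (bottom_up T u)"
  using inj_on_image_mem_iff[OF inj_on_bottom_up assms(2) children_subset]
  by (simp add: child_labels_bottom_up[OF assms(1)] children_def)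

lemma leaf_iff_child_labels_empty:
  "v \<in> verts T \<Longrightarrow> v \<in> leaves T \<longleftrightarrow> child_labels (bottom_up T v) = {}"
  by (simp add: child_labels_bottom_up leaves_def)

lemma card_child_labels: "u \<in> verts T \<Longrightarrow> card (child_labels (bottom_up T u)) = card (children T u)"
  using card_image[OF inj_on_subset[OF inj_on_bottom_up children_subset]]
  by (simp add: child_labels_bottom_up)

lemma vertex_of_label:
  assumes "k \<in> {1..card (verts T)}"
  shows "vertex_of k \<in> verts T \<and> bottom_up T (vertex_of k) = k"
  using bij_bottom_up assms unfolding vertex_of_def bij_betw_def
  by (simp add: inv_into_into f_inv_into_f)

lemma vertex_of_leaf_label:
  assumes "k \<in> {1..n}"
  shows "vertex_of k \<in> leaves T \<and> bottom_up T (vertex_of k) = k"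
proof -
  from assms have "k \<in> bottom_up T ` leaves T" by (simp add: bottom_up_leaves)
  then obtain v where "v \<in> leaves T" and "k = bottom_up T v" by (rule imageE)
  with leaves_subset show ?thesis by (auto simp: vertex_of_bottom_up)
qed

lemma vertex_of_internal_label:
  assumes "k \<in> {n<..card (verts T)}"
  shows "vertex_of k \<in> internal T \<and> bottom_up T (vertex_of k) = k"
proof -
  from assms have "k \<in> bottom_up T ` internal T" by (simp add: bottom_up_internal)
  then obtain u where "u \<in> internal T" and "k = bottom_up T u" by (rule imageE)
  then show ?thesis by (auto simp: vertex_of_bottom_up internal_def)
qed

lemma child_labels_below:
  assumes k: "k \<in> {n<..card (verts T)}"
  shows "child_labels k \<subseteq> {1..<k}"
proof
  have u: "vertex_of k \<in> verts T" "bottom_up T (vertex_of k) = k"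
    using vertex_of_internal_label[OF k] by (simp_all add: internal_def)
  fix x assume "x \<in> child_labels k"
  then obtain c where c: "c \<in> children T (vertex_of k)" and x: "x = bottom_up T c"
    by (auto simp: child_labels_def)
  then have "c \<in> verts T" using children_subset by blast
  with c u have "bottom_up T c < k"
    by (metis bottom_up_less_height height_arc_less children_def mem_Collect_eq)
  with x bottom_up_in_range[OF \<open>c \<in> verts T\<close>] show "x \<in> {1..<k}" by simp
qed

lemma label_height_internal:
  assumes k: "k \<in> {n<..card (verts T)}"
  shows "label_height k = Suc (Max (label_height ` child_labels k))"
proof -
  have u: "vertex_of k \<in> verts T" "children T (vertex_of k) \<noteq> {}"
    using vertex_of_internal_label[OF k] by (simp_all add: internal_iff)
  have "label_height ` child_labels k = height T ` children T (vertex_of k)"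
    unfolding child_labels_def image_image
    by (intro image_cong refl) (use children_subset label_height_bottom_up in blast)
  then show ?thesis
    using height_internal[OF u] by (simp add: label_height_def)
qed

lemma less_if_label_key_less:
  assumes a: "a \<in> {n<..card (verts T)}" and b: "b \<in> {n<..card (verts T)}"
    and less: "(label_height a, Min (child_labels a)) < (label_height b, Min (child_labels b))"
  shows "a < b"
proof -
  let ?u = "vertex_of a" and ?v = "vertex_of b"
  have u: "?u \<in> verts T" and "children T ?u \<noteq> {}" and v: "?v \<in> verts T"
    using vertex_of_internal_label[OF a] vertex_of_internal_label[OF b]
    by (simp_all add: internal_iff)
  then have "0 < height T ?u" by (simp add: children_empty_iff)
  from less consider "height T ?u < height T ?v"
    | "height T ?u = height T ?v"
      "Min (bottom_up T ` children T ?u) < Min (bottom_up T ` children T ?v)"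
    unfolding less_prod_def' by (auto simp: label_height_def child_labels_def)
  then have "bottom_up T ?u < bottom_up T ?v"
    by cases (use u v \<open>0 < height T ?u\<close> in \<open>auto intro: bottom_up_less_height bottom_up_less_Min\<close>)
  then show "a < b"
    using vertex_of_internal_label[OF a] vertex_of_internal_label[OF b] by simp
qed

lemma disjoint_family_on_child_labels: "disjoint_family_on child_labels {n<..card (verts T)}"
  unfolding disjoint_family_on_def
proof (intro ballI impI)
  fix a b assume a: "a \<in> {n<..card (verts T)}" and b: "b \<in> {n<..card (verts T)}" and "a \<noteq> b"
  have "vertex_of a \<noteq> vertex_of b"
  proof
    assume "vertex_of a = vertex_of b"
    then have "bottom_up T (vertex_of a) = bottom_up T (vertex_of b)" by simp
    with vertex_of_internal_label[OF a] vertex_of_internal_label[OF b] \<open>a \<noteq> b\<close> show False by simp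
  qed
  then have "children T (vertex_of a) \<inter> children T (vertex_of b) = {}"
    by (rule children_disjoint)
  moreover have "bottom_up T ` (children T (vertex_of a) \<inter> children T (vertex_of b)) =
      child_labels a \<inter> child_labels b"
    unfolding child_labels_def
    by (rule inj_on_image_Int[OF inj_on_bottom_up children_subset children_subset])
  ultimately show "child_labels a \<inter> child_labels b = {}" by simp
qed

lemma block_labelling_child_labels: "block_labelling n (card (verts T)) child_labels label_height"
proof
  fix k assume "k \<in> {1..n}"
  then have leaf: "vertex_of k \<in> leaves T" by (simp add: vertex_of_leaf_label)
  then show "child_labels k = {}"
    by (simp add: child_labels_def leaves_def)
  show "label_height k = 0"
    using leaf by (simp add: label_height_def height_leaf)
next
  fix k assume "k \<in> {n<..card (verts T)}"
  then show "child_labels k \<noteq> {}"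
    using vertex_of_internal_label by (simp add: child_labels_def internal_iff)
qed (fact child_labels_below label_height_internal less_if_label_key_less
    disjoint_family_on_child_labels)+

lemma matching_perm_eq_cycle_product:
  "matching_perm T = cycle_product child_labels (sorted_list_of_set {n<..card (verts T)})"
  unfolding matching_perm_def Let_def cycle_product_def child_labels_def vertex_of_def
    bottom_up_internal ..

lemma nontrivial_orbits_matching_perm:
  "nontrivial_orbits (matching_perm T) = child_labels ` {n<..card (verts T)}"
proof -
  interpret block_labelling n "card (verts T)" child_labels label_height
    by (rule block_labelling_child_labels)
  have "2 \<le> card (child_labels k)" if "k \<in> {n<..card (verts T)}" for k
    using vertex_of_internal_label[OF that] card_child_labels two_le_card_children
    by (metis internal_iff)
  then show ?thesis
    unfolding matching_perm_eq_cycle_product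
    by (subst nontrivial_orbits_cycle_product)
      (simp_all add: child_labels_def finite_children internal_blocks_disjoint)
qed

lemma matching_perm_outside: "x \<notin> {1..2 * n - 2} \<Longrightarrow> matching_perm T x = x"
proof -
  interpret block_labelling n "card (verts T)" child_labels label_height
    by (rule block_labelling_child_labels)
  assume x: "x \<notin> {1..2 * n - 2}"
  have "child_labels k \<subseteq> {1..2 * n - 2}" if k: "k \<in> {n<..card (verts T)}" for k
  proof
    fix x assume "x \<in> child_labels k"
    with internal_block_below[OF k] have "x \<in> {1..<k}" by blast
    with k card_verts_less show "x \<in> {1..2 * n - 2}" by auto
  qed
  with x have "x \<notin> \<Union>(child_labels ` {n<..card (verts T)})"
    by blast
  then show ?thesis
    unfolding matching_perm_eq_cycle_product
    by (intro permutes_not_in[OF cycle_product_permutes])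
      (simp_all add: child_labels_def finite_children)
qed

end

lemma tree_iso_if_same_child_labels:
  assumes T: "phylo n T" and T': "phylo n' T'" and card: "card (verts T) = card (verts T')"
    and labels: "\<And>k. k \<in> {1..card (verts T)} \<Longrightarrow> phylo.child_labels T k = phylo.child_labels T' k"
  shows "tree_iso T T'"
proof -
  interpret T: phylo n T by (fact T)
  interpret T': phylo n' T' by (fact T')
  define f where "f v = T'.vertex_of (bottom_up T v)" for v
  have f: "f v \<in> verts T'" "bottom_up T' (f v) = bottom_up T v" if "v \<in> verts T" for v
    using T'.vertex_of_label[of "bottom_up T v"] T.bottom_up_in_range[OF that] card
    unfolding f_def by simp_all
  have bij: "bij_betw f (verts T) (verts T')"
    unfolding f_def T'.vertex_of_def
    using bij_betw_trans[OF T.bij_bottom_up[unfolded card] bij_betw_inv_into[OF T'.bij_bottom_up]]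
    by (simp add: comp_def)
  have arcs: "(u, v) \<in> arcs T \<longleftrightarrow> (f u, f v) \<in> arcs T'"
    if u: "u \<in> verts T" and v: "v \<in> verts T" for u v
  proof -
    from T.bottom_up_in_range[OF u] show ?thesis
      using T.arc_iff_child_label[OF u v] T'.arc_iff_child_label[OF f(1)[OF u] f(1)[OF v]]
        f(2)[OF u] f(2)[OF v] labels by simp
  qed
  have "f (root T) = root T'"
  proof (rule ccontr)
    assume "f (root T) \<noteq> root T'"
    with f(1)[OF T.root_in_verts] obtain p where p: "(p, f (root T)) \<in> arcs T'"
      using T'.unique_parent by blast
    then have "p \<in> f ` verts T"
      using bij T'.arc_in_verts by (simp add: bij_betw_def)
    then obtain u where "u \<in> verts T" "p = f u" by blast
    with p arcs[OF _ T.root_in_verts] T.no_arc_to_root show False by blast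
  qed
  moreover have "label T' (f v) = label T v" if v: "v \<in> leaves T" for v
  proof -
    have vV: "v \<in> verts T" using v T.leaves_subset by blast
    from T.bottom_up_in_range[OF vV] have "f v \<in> leaves T'"
      using T.leaf_iff_child_labels_empty[OF vV] T'.leaf_iff_child_labels_empty[OF f(1)[OF vV]]
        f(2)[OF vV] labels v by simp
    then show ?thesis
      using T.bottom_up_leaf[OF v] T'.bottom_up_leaf f(2)[OF vV] by simp
  qed
  ultimately show ?thesis
    unfolding tree_iso_def using bij arcs by blast
qed

theorem proposition1:
  fixes n :: nat and T1 :: "'a ltree" and T2 :: "'b ltree"
  assumes "phylo_tree n T1" and "phylo_tree n T2"
    and "\<forall>i \<in> {1..2 * n - 2}. matching_perm T1 i = matching_perm T2 i"
  shows "tree_iso T1 T2"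
proof -
  interpret T1: phylo n T1 by (rule phylo.intro) (fact assms(1))
  interpret T2: phylo n T2 by (rule phylo.intro) (fact assms(2))
  have "matching_perm T1 = matching_perm T2"
    using assms(3) T1.matching_perm_outside T2.matching_perm_outside by fastforce
  then have blocks:
    "T1.child_labels ` {n<..card (verts T1)} = T2.child_labels ` {n<..card (verts T2)}"
    using T1.nontrivial_orbits_matching_perm T2.nontrivial_orbits_matching_perm by simp
  have "card (verts T1) - n = card (verts T2) - n"
    using block_labelling.card_internal_blocks[OF T1.block_labelling_child_labels]
      block_labelling.card_internal_blocks[OF T2.block_labelling_child_labels] blocks by simp
  then have card: "card (verts T1) = card (verts T2)"
    using T1.card_verts T2.card_verts by simp
  have "T1.child_labels k = T2.child_labels k" if "k \<in> {1..card (verts T1)}" for k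
    using block_labelling_unique[OF T1.block_labelling_child_labels
        T2.block_labelling_child_labels[folded card]] blocks that
    by (simp add: card)
  then show ?thesis
    using tree_iso_if_same_child_labels[OF T1.phylo_axioms T2.phylo_axioms card] by blast
qed

end
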